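(* Let $\Delta>1$ be a constant such that every $\Delta$-extensible map $g\colon W\to V$ satisfies $\sup_{x,y\in W}\frac{Dg(x)}{Dg(y)}\le2$. Let $W,V$ be open intervals and $g\colon W\to V$ a $C^2$ surjective diffeomorphism with $|Dg|^{-1/2}$ convex, which extends to a $C^2$ surjective diffeomorphism $g\colon\hat W\to\hat V$ with $|Dg|^{-1/2}$ convex, where $\hat W,\hat V$ are intervals and $\hat W$ compactly contains $W$. Suppose that each connected component of $\hat V\setminus V$ has length at least $10(1+\Delta)|V|$ and that $|V|>|\hat W|$. Then $|Dg|>5$ on $W$.
   Context: For $\delta>0$, a $C^2$ surjective diffeomorphism $g\colon W\to V$ between open intervals with $|Dg|^{-1/2}$ convex is called $\delta$-extensible if it extends to a $C^2$ surjective diffeomorphism $g\colon\hat W\to\hat V$ with $|Dg|^{-1/2}$ convex, where $\hat W,\hat V$ are intervals, $\hat W$ compactly contains $W$, and both connected components of $\hat V\setminus V$ have length at least $\delta|V|$. $|\cdot|$ denotes length. *)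

theory Defs
  imports "HOL-Analysis.Analysis"
begin

definition ilen :: "real set \<Rightarrow> ennreal" where
  "ilen I = emeasure lborel I"

definition open_interval :: "real set \<Rightarrow> bool" where
  "open_interval I \<longleftrightarrow> (\<exists>a b. a < b \<and> I = {a<..<b})"

definition has_C2_deriv :: "real set \<Rightarrow> (real \<Rightarrow> real) \<Rightarrow> (real \<Rightarrow> real) \<Rightarrow> bool" where
  "has_C2_deriv S f f' \<longleftrightarrow>
     (\<forall>x\<in>S. (f has_real_derivative f' x) (at x within S)) \<and>
     (\<exists>f''. (\<forall>x\<in>S. (f' has_real_derivative f'' x) (at x within S)) \<and> continuous_on S f'')"

definition C2_diffeo :: "real set \<Rightarrow> real set \<Rightarrow> (real \<Rightarrow> real) \<Rightarrow> (real \<Rightarrow> real) \<Rightarrow> bool" where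
  "C2_diffeo S T f Df \<longleftrightarrow> is_interval S \<and> is_interval T \<and> bij_betw f S T \<and>
     has_C2_deriv S f Df \<and> (\<exists>Dh. has_C2_deriv T (inv_into S f) Dh)"

definition inv_sqrt_convex :: "real set \<Rightarrow> (real \<Rightarrow> real) \<Rightarrow> bool" where
  "inv_sqrt_convex S Df \<longleftrightarrow> convex_on S (\<lambda>x. \<bar>Df x\<bar> powr (-1/2))"

definition extensible :: "real \<Rightarrow> (real \<Rightarrow> real) \<Rightarrow> (real \<Rightarrow> real) \<Rightarrow> real set \<Rightarrow> real set \<Rightarrow> bool" where
  "extensible \<delta> g Dg W V \<longleftrightarrow>
     open_interval W \<and> open_interval V \<and> C2_diffeo W V g Dg \<and> inv_sqrt_convex W Dg \<and>
     (\<exists>W' V' G DG. C2_diffeo W' V' G DG \<and> inv_sqrt_convex W' DG \<and>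
        (\<forall>x\<in>W. G x = g x) \<and> compact (closure W) \<and> closure W \<subseteq> W' \<and>
        card (components (V' - V)) = 2 \<and>
        (\<forall>C\<in>components (V' - V). ilen C \<ge> ennreal \<delta> * ilen V))"

end

theory Submission
  imports Defs
begin

(* Enlarge V = (a,b) symmetrically to an interval U with |U| = 10|V|. The components of
   V' - V are so long that V' still contains margins of length Delta |U| on both sides of U,
   so g restricted to the preimage P of U is Delta-extensible and Dg x / Dg y <= 2 on P.
   Since P lies in W' and |W'| < |V|, the mean value theorem gives a point of P where
   |Dg| > |U| / |V| = 10. As g has a differentiable inverse, Dg does not vanish on the
   interval P and so has constant sign there; the ratio bound then gives |Dg| > 5 on W,
   which g maps into V and hence lies in P. *)

lemma has_C2_deriv_subset:
  assumes "has_C2_deriv S f f'" "T \<subseteq> S" "\<And>x. x \<in> T \<Longrightarrow> f x = g x"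
  shows "has_C2_deriv T g f'"
proof -
  obtain f'' where f: "\<forall>x\<in>S. (f has_real_derivative f' x) (at x within S)"
    and f': "\<forall>x\<in>S. (f' has_real_derivative f'' x) (at x within S)" and "continuous_on S f''"
    using assms(1) unfolding has_C2_deriv_def by blast
  have "(g has_real_derivative f' x) (at x within T)" if "x \<in> T" for x
  proof (rule has_field_derivative_transform_within[where d=1 and f=f])
    show "(f has_real_derivative f' x) (at x within T)"
      using DERIV_subset f that assms(2) by blast
  qed (use that assms(3) in auto)
  moreover have "\<forall>x\<in>T. (f' has_real_derivative f'' x) (at x within T)"
    using DERIV_subset f' assms(2) by blast
  moreover have "continuous_on T f''"
    using continuous_on_subset \<open>continuous_on S f''\<close> assms(2) by blast
  ultimately show ?thesis unfolding has_C2_deriv_def by blast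
qed

lemma has_C2_deriv_continuous_on:
  assumes "has_C2_deriv S f f'"
  shows "continuous_on S f" "continuous_on S f'"
  using assms unfolding has_C2_deriv_def continuous_on_eq_continuous_within
  by (meson DERIV_continuous)+

lemma C2_diffeo_subset:
  assumes "C2_diffeo S T f Df" "S0 \<subseteq> S" "is_interval S0" "is_interval T0" "bij_betw f S0 T0"
  shows "C2_diffeo S0 T0 f Df"
proof -
  obtain Dh where h: "has_C2_deriv T (inv_into S f) Dh" and "has_C2_deriv S f Df"
    and "bij_betw f S T"
    using assms(1) unfolding C2_diffeo_def by blast
  have "T0 \<subseteq> T"
    using assms(2,5) \<open>bij_betw f S T\<close> by (auto simp: bij_betw_def)
  moreover have "inv_into S f y = inv_into S0 f y" if "y \<in> T0" for y
    using that assms(2,5) \<open>bij_betw f S T\<close>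
    by (auto simp: bij_betw_def inv_into_f_f inj_on_subset)
  ultimately have "has_C2_deriv T0 (inv_into S0 f) Dh"
    using has_C2_deriv_subset[OF h] by blast
  moreover have "has_C2_deriv S0 f Df"
    using has_C2_deriv_subset[OF \<open>has_C2_deriv S f Df\<close> assms(2)] by blast
  ultimately show ?thesis
    using assms(3-5) unfolding C2_diffeo_def by blast
qed

lemma C2_diffeo_inv_into_continuous_on:
  assumes "C2_diffeo S T f Df"
  shows "continuous_on T (inv_into S f)"
  using assms has_C2_deriv_continuous_on unfolding C2_diffeo_def by blast

lemma C2_diffeo_inv_image:
  assumes "C2_diffeo S T f Df" "is_interval J" "J \<subseteq> T"
  shows "C2_diffeo (inv_into S f ` J) J f Df"
proof (rule C2_diffeo_subset[OF assms(1)])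
  have bij: "bij_betw f S T"
    using assms(1) unfolding C2_diffeo_def by blast
  show "inv_into S f ` J \<subseteq> S"
    using assms(3) bij by (auto simp: bij_betw_def inv_into_into)
  have "connected (inv_into S f ` J)"
    using assms(2,3) C2_diffeo_inv_into_continuous_on[OF assms(1)]
    by (meson connected_continuous_image continuous_on_subset is_interval_connected)
  then show "is_interval (inv_into S f ` J)"
    by (simp add: is_interval_connected_1)
  show "bij_betw f (inv_into S f ` J) J"
  proof -
    have "f ` inv_into S f ` J = J"
      using assms(3) bij by (force simp: bij_betw_def image_image f_inv_into_f)
    then show ?thesis
      using \<open>inv_into S f ` J \<subseteq> S\<close> bij by (auto simp: bij_betw_def intro: inj_on_subset)
  qed
qed fact

lemma inv_sqrt_convex_subset:
  assumes "inv_sqrt_convex S Df" "is_interval S0" "S0 \<subseteq> S"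
  shows "inv_sqrt_convex S0 Df"
  using assms convex_on_subset is_interval_convex unfolding inv_sqrt_convex_def by blast

lemma inv_sqrt_convex_inv_image:
  assumes "C2_diffeo S T f Df" "inv_sqrt_convex S Df" "is_interval J" "J \<subseteq> T"
  shows "inv_sqrt_convex (inv_into S f ` J) Df"
proof (rule inv_sqrt_convex_subset[OF assms(2)])
  show "is_interval (inv_into S f ` J)"
    using C2_diffeo_inv_image[OF assms(1,3,4)] unfolding C2_diffeo_def by blast
  show "inv_into S f ` J \<subseteq> S"
    using assms(1,4) by (auto simp: C2_diffeo_def bij_betw_def inv_into_into)
qed

lemma C2_diffeo_inv_image_Ioo:
  assumes "C2_diffeo S T f Df" "u < v" "{u..v} \<subseteq> T"
  shows "inv_into S f ` {u<..<v} = open_segment (inv_into S f u) (inv_into S f v)"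
    and "inv_into S f u \<noteq> inv_into S f v"
proof -
  have "T \<subseteq> f ` S"
    using assms(1) unfolding C2_diffeo_def bij_betw_def by blast
  moreover have seg: "closed_segment u v \<subseteq> T"
    using assms(2,3) by (simp add: closed_segment_eq_real_ivl)
  ultimately have inj: "inj_on (inv_into S f) (closed_segment u v)"
    by (meson inj_on_inv_into order_trans)
  have cont: "continuous_on (closed_segment u v) (inv_into S f)"
    using C2_diffeo_inv_into_continuous_on[OF assms(1)] seg by (rule continuous_on_subset)
  have "open_segment u v = {u<..<v}"
    using assms(2) by (simp add: open_segment_eq_real_ivl)
  then show "inv_into S f ` {u<..<v} = open_segment (inv_into S f u) (inv_into S f v)"
    using continuous_injective_image_open_segment_1[OF cont inj] by simp
  show "inv_into S f u \<noteq> inv_into S f v"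
    using inj_onD[OF inj] assms(2) by fastforce
qed

lemma C2_diffeo_deriv_nonzero:
  assumes "C2_diffeo S T f Df" "x \<in> S" "at x within S \<noteq> bot"
  shows "Df x \<noteq> 0"
proof -
  obtain Dh where "has_C2_deriv T (inv_into S f) Dh" and "has_C2_deriv S f Df"
    and bij: "bij_betw f S T"
    using assms(1) unfolding C2_diffeo_def by blast
  then have "(inv_into S f has_real_derivative Dh (f x)) (at (f x) within f ` S)"
    and "(f has_real_derivative Df x) (at x within S)"
    using assms(2) unfolding has_C2_deriv_def bij_betw_def by blast+
  then have "(inv_into S f \<circ> f has_real_derivative Dh (f x) * Df x) (at x within S)"
    by (rule DERIV_image_chain)
  then have "((\<lambda>y. y) has_real_derivative Dh (f x) * Df x) (at x within S)"
  proof (rule has_field_derivative_transform_within[where d=1])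
    show "(inv_into S f \<circ> f) y = y" if "y \<in> S" for y
      using that bij by (simp add: bij_betw_def inv_into_f_f)
  qed (use assms(2) in auto)
  then have "Dh (f x) * Df x = 1"
    using has_field_derivative_unique[OF _ DERIV_ident assms(3)] by blast
  then show ?thesis by auto
qed

lemma connected_nonvanishing_same_sign:
  fixes f :: "'a::topological_space \<Rightarrow> real"
  assumes "connected S" "continuous_on S f" "\<And>x. x \<in> S \<Longrightarrow> f x \<noteq> 0" "x \<in> S" "y \<in> S"
  shows "0 < f x * f y"
proof (rule ccontr)
  assume "\<not> 0 < f x * f y"
  then have "min (f x) (f y) \<le> 0" "0 \<le> max (f x) (f y)"
    by (auto simp: zero_less_mult_iff not_less)
  moreover have "connected (f ` S)"
    using assms(2,1) by (rule connected_continuous_image)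
  ultimately have "0 \<in> f ` S"
    using assms(4,5) connectedD_interval[of "f ` S" "min (f x) (f y)" "max (f x) (f y)" 0]
    by (simp add: min_def max_def)
  then show False
    using assms(3) by force
qed

lemma C2_diffeo_abs_deriv_le_of_ratio_le:
  assumes diffeo: "C2_diffeo S T f Df" and "open S"
    and ratio: "\<forall>x\<in>S. \<forall>y\<in>S. Df x / Df y \<le> K" and "x \<in> S" "y \<in> S"
  shows "\<bar>Df x\<bar> \<le> K * \<bar>Df y\<bar>"
proof -
  have nonzero: "Df z \<noteq> 0" if "z \<in> S" for z
    using C2_diffeo_deriv_nonzero[OF diffeo that] at_within_open[OF that \<open>open S\<close>] by simp
  have "connected S" "continuous_on S Df"
    using diffeo has_C2_deriv_continuous_on(2) is_interval_connected
    unfolding C2_diffeo_def by blast+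
  then have "0 < Df x * Df y"
    using connected_nonvanishing_same_sign assms(4,5) nonzero by blast
  then have "Df x / Df y = \<bar>Df x\<bar> / \<bar>Df y\<bar>"
    by (auto simp: zero_less_mult_iff)
  moreover have "Df x / Df y \<le> K"
    using ratio assms(4,5) by blast
  ultimately show ?thesis
    using nonzero[OF assms(5)] by (simp add: divide_le_eq)
qed

lemma extensible_abs_deriv_le_of_ratio_le:
  assumes "extensible \<delta> f Df W V" "\<forall>x\<in>W. \<forall>y\<in>W. Df x / Df y \<le> K" "x \<in> W" "y \<in> W"
  shows "\<bar>Df x\<bar> \<le> K * \<bar>Df y\<bar>"
proof -
  have "C2_diffeo W V f Df" "open W"
    using assms(1) unfolding extensible_def open_interval_def by auto
  then show ?thesis
    using C2_diffeo_abs_deriv_le_of_ratio_le assms(2-4) by blast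
qed

lemma mvt_open_segment:
  fixes f :: "real \<Rightarrow> real"
  assumes "is_interval S" "s \<in> S" "t \<in> S" "s \<noteq> t"
    and "\<And>x. x \<in> S \<Longrightarrow> (f has_real_derivative f' x) (at x within S)"
  obtains \<xi> where "\<xi> \<in> open_segment s t" "f t - f s = f' \<xi> * (t - s)"
proof -
  have mvt: "\<exists>\<xi>\<in>open_segment a b. f b - f a = f' \<xi> * (b - a)"
    if "a < b" "a \<in> S" "b \<in> S" for a b
  proof -
    have "{a..b} \<subseteq> S"
      by (auto intro: mem_is_interval_1_I[OF assms(1) that(2,3)])
    then have "(f has_real_derivative f' x) (at x within {a..b})" if "x \<in> {a..b}" for x
      using assms(5) that DERIV_subset by blast
    then have "\<exists>\<xi>\<in>{a<..<b}. f b - f a = f' \<xi> * (b - a)"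
      using mvt_simple[OF \<open>a < b\<close>, of f "\<lambda>x y. f' x * y"]
      by (simp add: has_field_derivative_imp_has_derivative)
    then show ?thesis
      using that(1) by (simp add: open_segment_eq_real_ivl)
  qed
  consider "s < t" | "t < s"
    using assms(4) by linarith
  then show thesis
  proof cases
    case 1
    then show thesis
      using mvt[of s t] assms(2,3) that by blast
  next
    case 2
    then obtain \<xi> where "\<xi> \<in> open_segment s t" "f s - f t = f' \<xi> * (s - t)"
      using mvt[of t s] assms(2,3) by (auto simp: open_segment_commute)
    then show thesis
      using that by (metis minus_diff_eq mult_minus_right)
  qed
qed

lemma C2_diffeo_mvt_inv_image:
  assumes diffeo: "C2_diffeo S T f Df" and "u < v" "{u..v} \<subseteq> T"
  obtains p q \<xi> where "p < q" "inv_into S f ` {u<..<v} = {p<..<q}" "ennreal (q - p) \<le> ilen S" "\<xi> \<in> {p<..<q}" "v - u = \<bar>Df \<xi>\<bar> * (q - p)"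
proof -
  let ?h = "inv_into S f"
  let ?p = "min (?h u) (?h v)" and ?q = "max (?h u) (?h v)"
  have bij: "bij_betw f S T" and "is_interval S" and "has_C2_deriv S f Df"
    using diffeo unfolding C2_diffeo_def by blast+
  have "u \<in> T" "v \<in> T"
    using assms(2,3) by auto
  then have "?h u \<in> S" "?h v \<in> S" "f (?h u) = u" "f (?h v) = v"
    using bij by (auto simp: bij_betw_def inv_into_into f_inv_into_f)
  have "?h u \<noteq> ?h v"
    using C2_diffeo_inv_image_Ioo(2)[OF diffeo assms(2,3)] .
  obtain \<xi> where \<xi>: "\<xi> \<in> open_segment (?h u) (?h v)" "f (?h v) - f (?h u) = Df \<xi> * (?h v - ?h u)"
    using mvt_open_segment[OF \<open>is_interval S\<close> \<open>?h u \<in> S\<close> \<open>?h v \<in> S\<close> \<open>?h u \<noteq> ?h v\<close>]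
      \<open>has_C2_deriv S f Df\<close> unfolding has_C2_deriv_def by blast
  have seg: "open_segment (?h u) (?h v) = {?p<..<?q}"
    by (simp add: open_segment_eq_real_ivl min_def max_def)
  have "?p < ?q"
    using \<open>?h u \<noteq> ?h v\<close> by (auto simp: min_def max_def)
  have "v - u = \<bar>Df \<xi>\<bar> * \<bar>?h v - ?h u\<bar>"
    using \<xi>(2) \<open>f (?h u) = u\<close> \<open>f (?h v) = v\<close> assms(2) by (metis abs_mult abs_of_pos diff_gt_0_iff_gt)
  also have "\<bar>?h v - ?h u\<bar> = ?q - ?p"
    by (simp add: min_def max_def)
  finally have "v - u = \<bar>Df \<xi>\<bar> * (?q - ?p)" .
  have "?p \<in> S" "?q \<in> S"
    using \<open>?h u \<in> S\<close> \<open>?h v \<in> S\<close> by (simp_all add: min_def max_def)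
  then have "{?p..?q} \<subseteq> S"
    by (auto intro: mem_is_interval_1_I[OF \<open>is_interval S\<close> \<open>?p \<in> S\<close> \<open>?q \<in> S\<close>])
  then have "{?p<..<?q} \<subseteq> S"
    by (simp add: subset_eq)
  then have "ennreal (?q - ?p) \<le> ilen S"
    using \<open>?p < ?q\<close> real_interval_borel_measurable[OF \<open>is_interval S\<close>]
    unfolding ilen_def by (metis emeasure_lborel_Ioo emeasure_mono less_imp_le sets_lborel)
  then show thesis
    using that[of ?p ?q \<xi>] \<open>?p < ?q\<close> \<xi>(1) seg
      \<open>v - u = \<bar>Df \<xi>\<bar> * (?q - ?p)\<close> C2_diffeo_inv_image_Ioo(1)[OF diffeo assms(2,3)]
    by argo
qed

lemma C2_diffeo_exists_large_deriv:
  assumes "C2_diffeo S T f Df" "u < v" "{u..v} \<subseteq> T" "ilen S < ennreal L" "v - u = K * L"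
  obtains \<xi> where "\<xi> \<in> inv_into S f ` {u<..<v}" "K < \<bar>Df \<xi>\<bar>"
proof -
  obtain p q \<xi> where "p < q" "inv_into S f ` {u<..<v} = {p<..<q}" "ennreal (q - p) \<le> ilen S"
    "\<xi> \<in> {p<..<q}" and mvt: "v - u = \<bar>Df \<xi>\<bar> * (q - p)"
    by (rule C2_diffeo_mvt_inv_image[OF assms(1-3)])
  have "q - p < L"
    using \<open>ennreal (q - p) \<le> ilen S\<close> assms(4) \<open>p < q\<close>
    by (simp add: ennreal_less_iff[symmetric] order_le_less_trans)
  have "K < \<bar>Df \<xi>\<bar>"
  proof (rule ccontr)
    assume "\<not> K < \<bar>Df \<xi>\<bar>"
    then have "\<bar>Df \<xi>\<bar> * (q - p) \<le> K * (q - p)"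
      using \<open>p < q\<close> by (intro mult_right_mono) auto
    moreover have "0 < K"
      using \<open>\<not> K < \<bar>Df \<xi>\<bar>\<close> mvt assms(2,5) by (cases "K = 0") auto
    then have "K * (q - p) < K * L"
      using \<open>q - p < L\<close> by simp
    ultimately show False
      using mvt assms(5) by argo
  qed
  then show thesis
    using that \<open>\<xi> \<in> {p<..<q}\<close> \<open>inv_into S f ` {u<..<v} = {p<..<q}\<close> by blast
qed

lemma closure_image_subset_image_closure:
  fixes g :: "'a::topological_space \<Rightarrow> 'b::t2_space"
  assumes "compact (closure W)" "continuous_on (closure W) g"
  shows "closure (g ` W) \<subseteq> g ` closure W"
proof (rule closure_minimal)
  show "g ` W \<subseteq> g ` closure W"
    using closure_subset by (rule image_mono)
  show "closed (g ` closure W)"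
    using compact_continuous_image[OF assms(2,1)] by (rule compact_imp_closed)
qed

lemma C2_diffeo_closure_image_subset:
  assumes "C2_diffeo W' V' g Dg" "compact (closure W)" "closure W \<subseteq> W'"
  shows "closure (g ` W) \<subseteq> V'"
proof -
  have "continuous_on (closure W) g"
    using assms(1,3) has_C2_deriv_continuous_on(1) continuous_on_subset
    unfolding C2_diffeo_def by blast
  then have "closure (g ` W) \<subseteq> g ` closure W"
    by (rule closure_image_subset_image_closure[OF assms(2)])
  also have "\<dots> \<subseteq> V'"
    using assms(1,3) unfolding C2_diffeo_def bij_betw_def by blast
  finally show ?thesis .
qed

lemma connected_disjoint_Ioo:
  fixes D :: "real set"
  assumes "connected D" "D \<inter> {a<..<b} = {}" "a < b"
  shows "D \<subseteq> {..a} \<or> D \<subseteq> {b..}"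
proof (rule ccontr)
  assume "\<not> (D \<subseteq> {..a} \<or> D \<subseteq> {b..})"
  then obtain y z where "y \<in> D" "z \<in> D" "a < y" "z < b"
    by (meson atLeast_iff atMost_iff not_le subsetI)
  then have "z \<le> a" "b \<le> y"
    using assms(2) by auto
  then have "(a + b) / 2 \<in> D"
    using connectedD_interval[OF assms(1) \<open>z \<in> D\<close> \<open>y \<in> D\<close>] assms(3) by simp
  then show False
    using assms(2,3) by auto
qed

lemma components_interval_diff_Ioo:
  fixes S :: "real set"
  assumes "is_interval S" "a < b" "a \<in> S" "b \<in> S"
  shows "components (S - {a<..<b}) = {S \<inter> {..a}, S \<inter> {b..}}"
proof -
  let ?X = "S - {a<..<b}"
  have side: "C \<subseteq> S \<inter> {..a} \<or> C \<subseteq> S \<inter> {b..}" if "connected C" "C \<subseteq> ?X" for C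
    using connected_disjoint_Ioo[OF that(1) _ assms(2)] that(2) by blast
  have sides: "K \<noteq> {}" "K \<subseteq> ?X" "connected K" if "K \<in> {S \<inter> {..a}, S \<inter> {b..}}" for K
  proof -
    show "K \<noteq> {}" "K \<subseteq> ?X"
      using that assms(2-4) by auto
    show "connected K"
      using that assms(1) is_interval_Int is_interval_ic is_interval_ci
      unfolding is_interval_connected_1[symmetric] by blast
  qed
  have comp: "K \<in> components ?X" if K: "K \<in> {S \<inter> {..a}, S \<inter> {b..}}" for K
  proof -
    obtain C where C: "C \<in> components ?X" "K \<subseteq> C"
      using exists_component_superset[of K ?X] sides[OF K] by blast
    then have "C \<subseteq> K"
      using side[OF in_components_connected in_components_subset, OF C(1) C(1)] K assms(2-4)
      by auto
    then show ?thesis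
      using C by auto
  qed
  moreover have "C \<in> {S \<inter> {..a}, S \<inter> {b..}}" if C: "C \<in> components ?X" for C
  proof -
    obtain K where K: "K \<in> {S \<inter> {..a}, S \<inter> {b..}}" "C \<subseteq> K"
      using side[OF in_components_connected in_components_subset, OF C C] by blast
    then have "C \<inter> K \<noteq> {}"
      using in_components_nonempty[OF C] by blast
    then show ?thesis
      using components_eq[OF C comp[OF K(1)]] K(1) by auto
  qed
  ultimately show ?thesis
    by blast
qed

lemma components_Ioo_diff_Ioo:
  fixes c u v d :: real
  assumes "c < u" "u < v" "v < d"
  shows "components ({c<..<d} - {u<..<v}) = {{c<..u}, {v..<d}}"
    and "card (components ({c<..<d} - {u<..<v})) = 2"
proof -
  have "{c<..<d} \<inter> {..u} = {c<..u}" "{c<..<d} \<inter> {v..} = {v..<d}"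
    using assms by auto
  then show components: "components ({c<..<d} - {u<..<v}) = {{c<..u}, {v..<d}}"
    using components_interval_diff_Ioo[of "{c<..<d}" u v] assms by simp
  have "u \<in> {c<..u}" "u \<notin> {v..<d}"
    using assms by auto
  then have "{c<..u} \<noteq> {v..<d}"
    by blast
  then show "card (components ({c<..<d} - {u<..<v})) = 2"
    unfolding components by simp
qed

lemma interval_contains_margins:
  fixes S :: "real set"
  assumes "is_interval S" "a < b" "a \<in> S" "b \<in> S" "0 \<le> m" "m < K * (b - a)"
    and long: "\<forall>C\<in>components (S - {a<..<b}). ennreal K * ilen {a<..<b} \<le> ilen C"
  shows "{a - m..b + m} \<subseteq> S"
proof -
  have "0 \<le> K"
    using assms(2,5,6) mult_nonpos_nonneg[of K "b - a"] by linarith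
  then have "ennreal m < ennreal K * ilen {a<..<b}"
    using assms(2,5,6) unfolding ilen_def by (simp add: ennreal_mult[symmetric] ennreal_less_iff)
  then have "ennreal m < ilen (S \<inter> {..a})" "ennreal m < ilen (S \<inter> {b..})"
    using long components_interval_diff_Ioo[OF assms(1-4)] by (auto intro: less_le_trans)
  have "a - m \<in> S"
  proof (rule ccontr)
    assume "a - m \<notin> S"
    then have "S \<inter> {..a} \<subseteq> {a - m..a}"
      using mem_is_interval_1_I[OF assms(1) _ assms(3), of _ "a - m"] assms(5)
      by (force simp: not_le)
    then have "ilen (S \<inter> {..a}) \<le> ilen {a - m..a}"
      unfolding ilen_def by (rule emeasure_mono) simp
    then have "ilen (S \<inter> {..a}) \<le> ennreal m"
      unfolding ilen_def using assms(5) by simp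
    then show False
      using \<open>ennreal m < ilen (S \<inter> {..a})\<close> by simp
  qed
  moreover have "b + m \<in> S"
  proof (rule ccontr)
    assume "b + m \<notin> S"
    then have "S \<inter> {b..} \<subseteq> {b..b + m}"
      using mem_is_interval_1_I[OF assms(1) assms(4), of _ "b + m"] assms(5)
      by (force simp: not_le)
    then have "ilen (S \<inter> {b..}) \<le> ilen {b..b + m}"
      unfolding ilen_def by (rule emeasure_mono) simp
    then have "ilen (S \<inter> {b..}) \<le> ennreal m"
      unfolding ilen_def using assms(5) by simp
    then show False
      using \<open>ennreal m < ilen (S \<inter> {b..})\<close> by simp
  qed
  ultimately show ?thesis
    using assms(1) by (meson atLeastAtMost_iff mem_is_interval_1_I subsetI)
qed

lemma extensible_inv_image:
  assumes diffeo: "C2_diffeo S T f Df" and cvx: "inv_sqrt_convex S Df"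
    and "0 < \<delta>" "u < v" and margins: "{u - \<delta> * (v - u)<..<v + \<delta> * (v - u)} \<subseteq> T"
  shows "extensible \<delta> f Df (inv_into S f ` {u<..<v}) {u<..<v}"
proof -
  let ?h = "inv_into S f"
  define c d where "c = u - \<delta> * (v - u)" and "d = v + \<delta> * (v - u)"
  have "c < u" "v < d"
    using assms(3,4) unfolding c_def d_def by simp_all
  have "{c<..<d} \<subseteq> T"
    using margins unfolding c_def d_def .
  then have "{u..v} \<subseteq> T" "{u<..<v} \<subseteq> T"
    using \<open>c < u\<close> \<open>v < d\<close> by auto
  have "ilen {c<..u} = ennreal \<delta> * ilen {u<..<v}" "ilen {v..<d} = ennreal \<delta> * ilen {u<..<v}"
    using assms(3,4) unfolding ilen_def c_def d_def by (simp_all add: ennreal_mult)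
  then have long: "\<forall>C\<in>components ({c<..<d} - {u<..<v}). ennreal \<delta> * ilen {u<..<v} \<le> ilen C"
    using components_Ioo_diff_Ioo(1)[OF \<open>c < u\<close> assms(4) \<open>v < d\<close>] by simp
  let ?p = "min (?h u) (?h v)" and ?q = "max (?h u) (?h v)"
  have P: "?h ` {u<..<v} = {?p<..<?q}"
    using C2_diffeo_inv_image_Ioo(1)[OF diffeo assms(4) \<open>{u..v} \<subseteq> T\<close>]
    by (simp add: open_segment_eq_real_ivl min_def max_def)
  have "?p < ?q"
    using C2_diffeo_inv_image_Ioo(2)[OF diffeo assms(4) \<open>{u..v} \<subseteq> T\<close>]
    by (simp add: min_def max_def)
  have "closure (?h ` {u<..<v}) \<subseteq> ?h ` closure {u<..<v}"
    using assms(4) C2_diffeo_inv_into_continuous_on[OF diffeo] \<open>{u..v} \<subseteq> T\<close>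
    by (intro closure_image_subset_image_closure) (auto intro: continuous_on_subset)
  also have "\<dots> \<subseteq> ?h ` {c<..<d}"
    using \<open>c < u\<close> \<open>v < d\<close> assms(4) by auto
  finally have "closure (?h ` {u<..<v}) \<subseteq> ?h ` {c<..<d}" .
  moreover note long components_Ioo_diff_Ioo(2)[OF \<open>c < u\<close> assms(4) \<open>v < d\<close>]
  moreover have "open_interval (?h ` {u<..<v})" "open_interval {u<..<v}"
    and "compact (closure (?h ` {u<..<v}))"
    using P \<open>?p < ?q\<close> assms(4) unfolding open_interval_def by auto
  moreover have "C2_diffeo (?h ` {u<..<v}) {u<..<v} f Df" "inv_sqrt_convex (?h ` {u<..<v}) Df"
    and "C2_diffeo (?h ` {c<..<d}) {c<..<d} f Df" "inv_sqrt_convex (?h ` {c<..<d}) Df"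
    using C2_diffeo_inv_image[OF diffeo] inv_sqrt_convex_inv_image[OF diffeo cvx]
      \<open>{c<..<d} \<subseteq> T\<close> \<open>{u<..<v} \<subseteq> T\<close> by (simp_all add: is_interval_convex_1)
  ultimately show ?thesis
    unfolding extensible_def by blast
qed

theorem mainTheorem4:
  fixes \<Delta> :: real and g Dg :: "real \<Rightarrow> real" and W V W' V' :: "real set"
  assumes "\<Delta> > 1"
    and "\<forall>h Dh W0 V0. extensible \<Delta> h Dh W0 V0 \<longrightarrow> (\<forall>x\<in>W0. \<forall>y\<in>W0. Dh x / Dh y \<le> 2)"
    and "open_interval W" and "open_interval V"
    and "C2_diffeo W V g Dg" and "inv_sqrt_convex W Dg"
    and "C2_diffeo W' V' g Dg" and "inv_sqrt_convex W' Dg"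
    and "compact (closure W)" and "closure W \<subseteq> W'"
    and "\<forall>C\<in>components (V' - V). ilen C \<ge> ennreal (10 * (1 + \<Delta>)) * ilen V"
    and "ilen V > ilen W'"
  shows "\<forall>x\<in>W. \<bar>Dg x\<bar> > 5"
proof -
  obtain a b where "a < b" and V: "V = {a<..<b}"
    using assms(4) unfolding open_interval_def by blast
  \<comment> \<open>U = (u, v) has length 10 L, and [a - m, b + m] is U with margins \<Delta> |U| on both sides.\<close>
  define L m u v where "L = b - a" and "m = 9/2 * L + 10 * \<Delta> * L"
    and "u = a - 9/2 * L" and "v = b + 9/2 * L"
  have "0 < L" "0 \<le> m" "ilen V = ennreal L"
    using \<open>a < b\<close> assms(1) unfolding L_def m_def V ilen_def by simp_all
  have gW: "g ` W = V" and "is_interval V'"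
    using assms(5,7) unfolding C2_diffeo_def bij_betw_def by blast+
  have "a \<in> V'" "b \<in> V'"
    using C2_diffeo_closure_image_subset[OF assms(7,9,10)] \<open>a < b\<close> unfolding gW V by auto
  have "m < 10 * (1 + \<Delta>) * (b - a)"
    using \<open>0 < L\<close> unfolding m_def L_def[symmetric] by (simp add: algebra_simps)
  then have "{a - m..b + m} \<subseteq> V'"
    using interval_contains_margins[OF \<open>is_interval V'\<close> \<open>a < b\<close> \<open>a \<in> V'\<close> \<open>b \<in> V'\<close> \<open>0 \<le> m\<close>]
      assms(11) unfolding V by blast
  moreover have "u - \<Delta> * (v - u) = a - m" "v + \<Delta> * (v - u) = b + m" "a - m \<le> u" "v \<le> b + m"
    and "u < v" "v - u = 10 * L"
    using \<open>0 < L\<close> assms(1) unfolding u_def v_def m_def L_def by (simp_all add: algebra_simps)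
  ultimately have "{u - \<Delta> * (v - u)<..<v + \<Delta> * (v - u)} \<subseteq> V'" "{u..v} \<subseteq> V'"
    by auto
  let ?P = "inv_into W' g ` {u<..<v}"
  have ext: "extensible \<Delta> g Dg ?P {u<..<v}"
    using extensible_inv_image[OF assms(7,8)] \<open>{u - \<Delta> * (v - u)<..<v + \<Delta> * (v - u)} \<subseteq> V'\<close>
      \<open>u < v\<close> assms(1) by simp
  obtain \<xi> where "\<xi> \<in> ?P" "10 < \<bar>Dg \<xi>\<bar>"
    using C2_diffeo_exists_large_deriv[OF assms(7) \<open>u < v\<close> \<open>{u..v} \<subseteq> V'\<close> _ \<open>v - u = 10 * L\<close>]
      assms(12) \<open>ilen V = ennreal L\<close> by auto
  have "inj_on g W'" "W \<subseteq> W'"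
    using assms(7,10) closure_subset unfolding C2_diffeo_def bij_betw_def by blast+
  then have "W = inv_into W' g ` g ` W"
    by simp
  also have "\<dots> \<subseteq> ?P"
    using \<open>0 < L\<close> unfolding gW V u_def v_def by (intro image_mono) auto
  finally have "W \<subseteq> ?P" .
  have ratio: "\<forall>x\<in>?P. \<forall>y\<in>?P. Dg x / Dg y \<le> 2"
    using assms(2) ext by blast
  show ?thesis
  proof
    fix x assume "x \<in> W"
    then have "\<bar>Dg \<xi>\<bar> \<le> 2 * \<bar>Dg x\<bar>"
      using extensible_abs_deriv_le_of_ratio_le[OF ext ratio \<open>\<xi> \<in> ?P\<close>] \<open>W \<subseteq> ?P\<close> by blast
    then show "5 < \<bar>Dg x\<bar>"
      using \<open>10 < \<bar>Dg \<xi>\<bar>\<close> by linarith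
  qed
qed

end
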